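(* Let $u\in\mathcal{L}PSH(\mathbb{C}^n)$ with $\sigma_u>n$. Then every polynomial $P\in\mathcal{P}_\infty(u)$ has degree at most $\sigma_u-n$. Furthermore, if $\mathcal{L}_\infty(u)>n$ and $c_\zeta(u)>1$ for all $\zeta\in\mathbb{C}^n$, then every polynomial of degree smaller than $\mathcal{L}_\infty(u)-n$ belongs to $\mathcal{P}_\infty(u)$.
   Context: $\mathcal{L}PSH(\mathbb{C}^n)$: plurisubharmonic $u$ on $\mathbb{C}^n$ with finite $\sigma_u=\limsup_{|z|\to\infty}u(z)/\log|z|$. $\mathcal{L}_\infty(u)=\liminf_{|z|\to\infty}u(z)/\log|z|$. $\mathcal{P}_\infty(u)$ is the set of polynomials $P:\mathbb{C}^n\to\mathbb{C}$ such that $\int_{\mathbb{C}^n\setminus K}|P|^2e^{-2u}d\lambda<\infty$ for some compact $K$. $c_\zeta(u)=\sup\{c>0: e^{-cu}\text{ is square integrable on some neighborhood of }\zeta\}$. *)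

theory Defs
  imports "HOL-Analysis.Analysis"
begin

text \<open>C^n is modelled as the type complex ^ 'n (n = CARD('n)); Lebesgue measure on C^n = R^2n
  is lborel on this Euclidean space. Plurisubharmonic functions take values in [-\<infinity>, \<infinity>).\<close>

definition ereal_integral :: "'a measure \<Rightarrow> ('a \<Rightarrow> ereal) \<Rightarrow> ereal" where
  "ereal_integral M f =
     enn2ereal (\<integral>\<^sup>+ x. e2ennreal (f x) \<partial>M) - enn2ereal (\<integral>\<^sup>+ x. e2ennreal (- f x) \<partial>M)"

definition circle_mean :: "(complex \<Rightarrow> ereal) \<Rightarrow> ereal" where
  "circle_mean f = ereal_integral (restrict_space lborel {0..2*pi}) (\<lambda>t. f (cis t)) / ereal (2*pi)"

text \<open>Plurisubharmonic on all of C^n: values in [-\<infinity>,\<infinity>), not identically -\<infinity>,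
  upper semicontinuous, and subharmonic (sub-mean-value property) on every complex line.\<close>
definition psh :: "(complex^'n \<Rightarrow> ereal) \<Rightarrow> bool" where
  "psh u \<longleftrightarrow> (\<forall>z. u z \<noteq> \<infinity>) \<and> (\<exists>z. u z \<noteq> -\<infinity>) \<and>
     (\<forall>c::ereal. open {z. u z < c}) \<and>
     (\<forall>a b. u a \<le> circle_mean (\<lambda>w. u (a + w *s b)))"

definition sigma_inf :: "(complex^'n \<Rightarrow> ereal) \<Rightarrow> ereal" where
  "sigma_inf u = Limsup at_infinity (\<lambda>z. u z / ereal (ln (norm z)))"

definition L_inf :: "(complex^'n \<Rightarrow> ereal) \<Rightarrow> ereal" where
  "L_inf u = Liminf at_infinity (\<lambda>z. u z / ereal (ln (norm z)))"

definition LPSH :: "(complex^'n \<Rightarrow> ereal) \<Rightarrow> bool" where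
  "LPSH u \<longleftrightarrow> psh u \<and> \<bar>sigma_inf u\<bar> \<noteq> \<infinity>"

definition exp_weight :: "real \<Rightarrow> ('a \<Rightarrow> ereal) \<Rightarrow> 'a \<Rightarrow> ennreal" where
  "exp_weight t u z = (if u z = -\<infinity> then \<infinity> else ennreal (exp (- t * real_of_ereal (u z))))"

text \<open>Polynomials on C^n: given by a finitely supported coefficient function on multi-indices.\<close>
definition mpoly_fun :: "(('n::finite \<Rightarrow> nat) \<Rightarrow> complex) \<Rightarrow> complex^'n \<Rightarrow> complex" where
  "mpoly_fun c z = (\<Sum>\<alpha>\<in>{\<alpha>. c \<alpha> \<noteq> 0}. c \<alpha> * (\<Prod>i\<in>UNIV. (z $ i) ^ \<alpha> i))"

text \<open>Total degree (the zero polynomial gets degree 0).\<close>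
definition total_degree :: "(('n::finite \<Rightarrow> nat) \<Rightarrow> complex) \<Rightarrow> nat" where
  "total_degree c = Max ({sum \<alpha> UNIV | \<alpha>. c \<alpha> \<noteq> 0} \<union> {0})"

definition P_inf :: "(complex^'n \<Rightarrow> ereal) \<Rightarrow> (complex^'n \<Rightarrow> complex) set" where
  "P_inf u = {P. (\<exists>c. finite {\<alpha>. c \<alpha> \<noteq> 0} \<and> P = mpoly_fun c) \<and>
     (\<exists>K. compact K \<and>
        (\<integral>\<^sup>+ z\<in>(UNIV - K). ennreal ((norm (P z))\<^sup>2) * exp_weight 2 u z \<partial>lborel) < \<infinity>)}"

definition lct :: "(complex^'n \<Rightarrow> ereal) \<Rightarrow> complex^'n \<Rightarrow> ereal" where
  "lct u \<zeta> = Sup {ereal c | c. c > 0 \<and>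
     (\<exists>U. open U \<and> \<zeta> \<in> U \<and> (\<integral>\<^sup>+ z\<in>U. exp_weight (2*c) u z \<partial>lborel) < \<infinity>)}"

end

theory Submission
  imports Defs
begin

text \<open>Outside a large ball the weight \<open>exp(-2u)\<close> lies above \<open>|z|^(-2s)\<close> for every
  \<open>s > sigma_inf u\<close> and below it for every \<open>s < L_inf u\<close>.
  If \<open>P\<close> has degree \<open>d\<close>, then \<open>|P(z)| \<le> C |z|^d\<close>, and summing over the dyadic shells
  \<open>2^k \<le> |z| < 2^(k+1)\<close> shows that \<open>|P|^2 |z|^(-2s)\<close> is integrable at infinity once
  \<open>s > d + n\<close>; this gives the second statement.
  Conversely, the top-degree part of \<open>P\<close> does not vanish at some \<open>\<omega>\<close>, so
  \<open>|P| \<ge> m t^d\<close> on the balls \<open>B(t\<omega>, t\<delta>)\<close> for large \<open>t\<close>. These balls have volume of order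
  \<open>t^(2n)\<close>, so along \<open>t = 2^j\<close> the integral of \<open>|P|^2 |z|^(-2s)\<close> diverges when
  \<open>s \<le> d + n\<close>. If \<open>d > sigma_inf u - n\<close>, the choice \<open>s = d + n\<close> therefore contradicts
  \<open>P \<in> P_inf u\<close>.\<close>

section \<open>Polynomials and their leading forms\<close>

definition monomial :: "('n::finite \<Rightarrow> nat) \<Rightarrow> complex^'n \<Rightarrow> complex" where
  "monomial \<alpha> z = (\<Prod>i\<in>UNIV. (z $ i) ^ \<alpha> i)"

lemma mpoly_fun_eq_sum_monomial: "mpoly_fun c z = (\<Sum>\<alpha> | c \<alpha> \<noteq> 0. c \<alpha> * monomial \<alpha> z)"
  by (simp add: mpoly_fun_def monomial_def)

lemma monomial_scaleR: "monomial \<alpha> (r *\<^sub>R z) = complex_of_real r ^ sum \<alpha> UNIV * monomial \<alpha> z"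
proof -
  have "(r *\<^sub>R z) $ i = complex_of_real r * z $ i" for i
    by (subst vector_scaleR_component) (rule scaleR_conv_of_real)
  then show ?thesis
    by (simp add: monomial_def power_mult_distrib prod.distrib power_sum)
qed

lemma monomial_0: "sum \<alpha> UNIV \<noteq> 0 \<Longrightarrow> monomial \<alpha> 0 = 0"
  by (auto simp: monomial_def intro: prod_zero)

lemma norm_monomial_le:
  fixes z :: "complex^'n"
  assumes "1 \<le> norm z" "sum \<alpha> UNIV \<le> e"
  shows "norm (monomial \<alpha> z) \<le> norm z ^ e"
proof -
  have "norm (monomial \<alpha> z) = (\<Prod>i\<in>UNIV. norm (z $ i) ^ \<alpha> i)"
    by (simp add: monomial_def prod_norm[symmetric] norm_power)
  also have "\<dots> \<le> (\<Prod>i\<in>UNIV. norm z ^ \<alpha> i)"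
    by (intro prod_mono conjI power_mono) (auto intro: Finite_Cartesian_Product.norm_nth_le)
  also have "\<dots> = norm z ^ sum \<alpha> UNIV"
    by (simp add: power_sum)
  also have "\<dots> \<le> norm z ^ e"
    using assms by (intro power_increasing)
  finally show ?thesis .
qed

lemma finite_total_degree_set:
  "finite {\<alpha>. c \<alpha> \<noteq> 0} \<Longrightarrow> finite ({sum \<alpha> UNIV | \<alpha>. c \<alpha> \<noteq> 0} \<union> {0})"
  by (simp add: setcompr_eq_image)

lemma sum_le_total_degree:
  assumes "finite {\<alpha>. c \<alpha> \<noteq> 0}" "c \<alpha> \<noteq> 0"
  shows "sum \<alpha> UNIV \<le> total_degree c"
  unfolding total_degree_def using assms by (intro Max_ge finite_total_degree_set) auto

lemma total_degree_attained:
  assumes "finite {\<alpha>. c \<alpha> \<noteq> 0}" "total_degree c \<noteq> 0"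
  obtains \<alpha> where "c \<alpha> \<noteq> 0" "sum \<alpha> UNIV = total_degree c"
proof -
  have "total_degree c \<in> {sum \<alpha> UNIV | \<alpha>. c \<alpha> \<noteq> 0} \<union> {0}"
    unfolding total_degree_def using assms(1) by (intro Max_in finite_total_degree_set) auto
  with assms(2) that show ?thesis by auto
qed

lemma univariate_polyfun_eq_0:
  fixes a :: "nat \<Rightarrow> complex"
  assumes "finite K" "\<And>t. (\<Sum>k\<in>K. a k * t ^ k) = 0" "k \<in> K"
  shows "a k = 0"
proof -
  define n where "n = Max (insert 0 K)"
  define b where "b k = (if k \<in> K then a k else 0)" for k
  have "(\<Sum>k\<le>n. b k * t ^ k) = (\<Sum>k\<in>K. a k * t ^ k)" for t
    unfolding n_def b_def using assms(1)
    by (intro sum.mono_neutral_cong_right) auto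
  then have "\<forall>i\<le>n. b i = 0"
    using assms(2) polyfun_eq_0 by metis
  moreover have "k \<le> n"
    using assms(1,3) by (simp add: n_def)
  ultimately show ?thesis
    using assms(3) b_def by metis
qed

text \<open>Induction on the set of variables: grouping the terms by the exponent of one variable
  gives a univariate polynomial whose coefficients are polynomials in the others.\<close>
lemma polyfun_eq_0_imp_fiber_sum_eq_0:
  fixes c :: "('n::finite \<Rightarrow> nat) \<Rightarrow> complex"
  assumes "finite S" "finite A"
    and "\<And>z::complex^'n. (\<Sum>\<alpha>\<in>A. c \<alpha> * (\<Prod>i\<in>S. (z $ i) ^ \<alpha> i)) = 0"
  shows "(\<Sum>\<alpha> | \<alpha> \<in> A \<and> (\<forall>i\<in>S. \<alpha> i = \<beta> i). c \<alpha>) = 0"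
  using assms
proof (induction S arbitrary: A rule: finite_induct)
  case empty
  then show ?case by simp
next
  case (insert j S)
  define Q where "Q k z = (\<Sum>\<alpha> | \<alpha> \<in> A \<and> \<alpha> j = k. c \<alpha> * (\<Prod>i\<in>S. (z $ i) ^ \<alpha> i))"
    for k and z :: "complex^'n"
  have split: "(\<Sum>\<alpha>\<in>A. c \<alpha> * (\<Prod>i\<in>insert j S. (z $ i) ^ \<alpha> i))
      = (\<Sum>k\<in>(\<lambda>\<alpha>. \<alpha> j) ` A. Q k z * (z $ j) ^ k)" for z
    unfolding Q_def sum_distrib_right sum.image_gen[OF insert.prems(1), of _ "\<lambda>\<alpha>. \<alpha> j"]
    by (intro sum.cong refl) (auto simp: insert.hyps mult_ac)
  have "Q k z = 0" for k z
  proof (cases "k \<in> (\<lambda>\<alpha>. \<alpha> j) ` A")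
    case True
    have "(\<Sum>k\<in>(\<lambda>\<alpha>. \<alpha> j) ` A. Q k z * t ^ k) = 0" for t
    proof -
      define w where "w = (\<chi> i. if i = j then t else z $ i)"
      have "Q k w = Q k z" for k
        unfolding Q_def w_def using insert.hyps by (auto intro!: sum.cong prod.cong)
      then show ?thesis
        using insert.prems(2)[of w] split[of w] by (simp add: w_def)
    qed
    with True insert.prems(1) show ?thesis
      using univariate_polyfun_eq_0[of "(\<lambda>\<alpha>. \<alpha> j) ` A" "\<lambda>k. Q k z" k] by blast
  next
    case False
    then show ?thesis
      by (auto simp: Q_def intro!: sum.neutral)
  qed
  then have "(\<Sum>\<alpha> | \<alpha> \<in> {\<alpha> \<in> A. \<alpha> j = \<beta> j} \<and> (\<forall>i\<in>S. \<alpha> i = \<beta> i). c \<alpha>) = 0"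
    using insert.prems(1) by (intro insert.IH) (auto simp: Q_def)
  moreover have "{\<alpha>. \<alpha> \<in> {\<alpha> \<in> A. \<alpha> j = \<beta> j} \<and> (\<forall>i\<in>S. \<alpha> i = \<beta> i)}
      = {\<alpha>. \<alpha> \<in> A \<and> (\<forall>i\<in>insert j S. \<alpha> i = \<beta> i)}"
    by auto
  ultimately show ?case by simp
qed

lemma polyfun_eq_0_imp_coeff_eq_0:
  assumes "finite A" "\<And>z. (\<Sum>\<alpha>\<in>A. c \<alpha> * monomial \<alpha> z) = 0" "\<beta> \<in> A"
  shows "c \<beta> = 0"
proof -
  have "{\<alpha>. \<alpha> \<in> A \<and> (\<forall>i\<in>UNIV. \<alpha> i = \<beta> i)} = {\<beta>}"
    using assms(3) by auto
  then show ?thesis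
    using polyfun_eq_0_imp_fiber_sum_eq_0[of UNIV A c \<beta>] assms(1,2)
    by (simp add: monomial_def)
qed

definition leading_form :: "(('n::finite \<Rightarrow> nat) \<Rightarrow> complex) \<Rightarrow> complex^'n \<Rightarrow> complex" where
  "leading_form c z = (\<Sum>\<alpha> | c \<alpha> \<noteq> 0 \<and> sum \<alpha> UNIV = total_degree c. c \<alpha> * monomial \<alpha> z)"

lemma leading_form_scaleR:
  "leading_form c (r *\<^sub>R z) = complex_of_real r ^ total_degree c * leading_form c z"
  unfolding leading_form_def monomial_scaleR sum_distrib_left
  by (intro sum.cong refl) (auto simp: mult_ac)

lemma continuous_leading_form: "continuous_on UNIV (leading_form c)"
  unfolding leading_form_def monomial_def by (intro continuous_intros)

lemma leading_form_0: "total_degree c \<noteq> 0 \<Longrightarrow> leading_form c 0 = 0"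
  unfolding leading_form_def by (auto intro!: sum.neutral monomial_0)

lemma leading_form_nonzero:
  assumes "finite {\<alpha>. c \<alpha> \<noteq> 0}" "total_degree c \<noteq> 0"
  obtains \<omega> where "leading_form c \<omega> \<noteq> 0"
proof -
  obtain \<alpha> where "c \<alpha> \<noteq> 0" "sum \<alpha> UNIV = total_degree c"
    using total_degree_attained[OF assms] .
  moreover have "finite {\<alpha>. c \<alpha> \<noteq> 0 \<and> sum \<alpha> UNIV = total_degree c}"
    using assms(1) by (rule rev_finite_subset) auto
  ultimately have "\<exists>\<omega>. leading_form c \<omega> \<noteq> 0"
    using polyfun_eq_0_imp_coeff_eq_0[of _ c \<alpha>] unfolding leading_form_def by auto
  with that show ?thesis
    by blast
qed

lemma norm_mpoly_fun_le:
  assumes "finite {\<alpha>. c \<alpha> \<noteq> 0}" "1 \<le> norm z"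
  shows "norm (mpoly_fun c z) \<le> (\<Sum>\<alpha> | c \<alpha> \<noteq> 0. norm (c \<alpha>)) * norm z ^ total_degree c"
proof -
  have "norm (mpoly_fun c z) \<le> (\<Sum>\<alpha> | c \<alpha> \<noteq> 0. norm (c \<alpha>) * norm (monomial \<alpha> z))"
    unfolding mpoly_fun_eq_sum_monomial norm_mult[symmetric] by (rule norm_sum)
  also have "\<dots> \<le> (\<Sum>\<alpha> | c \<alpha> \<noteq> 0. norm (c \<alpha>) * norm z ^ total_degree c)"
    using assms by (intro sum_mono mult_left_mono norm_monomial_le sum_le_total_degree) auto
  finally show ?thesis
    by (simp add: sum_distrib_right)
qed

lemma norm_mpoly_fun_minus_leading_form_le:
  assumes "finite {\<alpha>. c \<alpha> \<noteq> 0}" "1 \<le> norm z"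
  shows "norm (mpoly_fun c z - leading_form c z)
           \<le> (\<Sum>\<alpha> | c \<alpha> \<noteq> 0. norm (c \<alpha>)) * norm z ^ (total_degree c - 1)"
proof -
  let ?A = "{\<alpha>. c \<alpha> \<noteq> 0}" and ?D = "{\<alpha>. c \<alpha> \<noteq> 0 \<and> sum \<alpha> UNIV = total_degree c}"
  have "mpoly_fun c z = (\<Sum>\<alpha>\<in>?A - ?D. c \<alpha> * monomial \<alpha> z) + leading_form c z"
    unfolding mpoly_fun_eq_sum_monomial leading_form_def
    by (rule sum.subset_diff) (use assms(1) in auto)
  then have "mpoly_fun c z - leading_form c z = (\<Sum>\<alpha>\<in>?A - ?D. c \<alpha> * monomial \<alpha> z)"
    by simp
  also have "norm \<dots> \<le> (\<Sum>\<alpha>\<in>?A - ?D. norm (c \<alpha>) * norm (monomial \<alpha> z))"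
    unfolding norm_mult[symmetric] by (rule norm_sum)
  also have "\<dots> \<le> (\<Sum>\<alpha>\<in>?A - ?D. norm (c \<alpha>) * norm z ^ (total_degree c - 1))"
  proof (intro sum_mono mult_left_mono norm_monomial_le assms(2))
    fix \<alpha> assume "\<alpha> \<in> ?A - ?D"
    with sum_le_total_degree[OF assms(1)] show "sum \<alpha> UNIV \<le> total_degree c - 1"
      by fastforce
  qed simp
  also have "\<dots> \<le> (\<Sum>\<alpha>\<in>?A. norm (c \<alpha>) * norm z ^ (total_degree c - 1))"
    using assms(1) by (intro sum_mono2) auto
  finally show ?thesis
    by (simp add: sum_distrib_right)
qed

lemma norm_bounds_in_scaled_ball:
  fixes \<omega> z :: "'a::real_normed_vector"
  assumes "norm \<omega> = 3/2" "\<delta> \<le> 1/2" "0 < t" "z \<in> ball (t *\<^sub>R \<omega>) (t * \<delta>)"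
  shows "t < norm z" "norm z < 2 * t"
proof -
  have "t * \<delta> \<le> t * (1/2)"
    using assms(2,3) by (intro mult_left_mono) auto
  moreover have "norm (z - t *\<^sub>R \<omega>) < t * \<delta>"
    using assms(4) by (simp add: dist_norm norm_minus_commute)
  ultimately have "norm (z - t *\<^sub>R \<omega>) < t/2"
    by linarith
  moreover have "norm (t *\<^sub>R \<omega>) = 3/2 * t"
    using assms(1,3) by simp
  ultimately show "t < norm z" "norm z < 2 * t"
    using norm_triangle_ineq2[of z "t *\<^sub>R \<omega>"] norm_triangle_ineq2[of "t *\<^sub>R \<omega>" z]
      norm_minus_commute[of z "t *\<^sub>R \<omega>"] by linarith+
qed

text \<open>\<open>\<omega>\<close> is scaled to norm \<open>3/2\<close> and \<open>\<delta> \<le> 1/2\<close> so that the ball \<open>B(t\<omega>, t\<delta>)\<close> lies in the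
  annulus \<open>t < |z| < 2t\<close>; the balls for \<open>t = 2^j \<tau>\<close> are then pairwise disjoint.\<close>
lemma leading_form_bounded_below_on_balls:
  assumes "finite {\<alpha>. c \<alpha> \<noteq> 0}" "total_degree c \<noteq> 0"
  obtains \<omega> \<delta> m where "norm \<omega> = 3/2" "0 < \<delta>" "\<delta> \<le> 1/2" "0 < m"
    "\<And>t z. 0 < t \<Longrightarrow> z \<in> ball (t *\<^sub>R \<omega>) (t * \<delta>) \<Longrightarrow>
       t ^ total_degree c * m \<le> norm (leading_form c z)"
proof -
  obtain \<omega>0 where "leading_form c \<omega>0 \<noteq> 0"
    using leading_form_nonzero[OF assms] .
  moreover have "\<omega>0 \<noteq> 0"
    using calculation leading_form_0[OF assms(2)] by auto
  ultimately obtain \<omega> where \<omega>: "norm \<omega> = 3/2" "leading_form c \<omega> \<noteq> 0"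
    by (intro that[of "(3 / (2 * norm \<omega>0)) *\<^sub>R \<omega>0"]) (auto simp: leading_form_scaleR)
  define m where "m = norm (leading_form c \<omega>) / 2"
  have "0 < m"
    using \<omega>(2) by (simp add: m_def)
  then obtain \<delta>0 where "0 < \<delta>0" and \<delta>0: "\<And>y. dist y \<omega> < \<delta>0 \<Longrightarrow> dist (leading_form c y) (leading_form c \<omega>) < m"
    using continuous_leading_form[of c] unfolding continuous_on_iff by (metis UNIV_I)
  define \<delta> where "\<delta> = min \<delta>0 (1/2)"
  have bound: "t ^ total_degree c * m \<le> norm (leading_form c z)"
    if "0 < t" "z \<in> ball (t *\<^sub>R \<omega>) (t * \<delta>)" for t z
  proof -
    define y where "y = (1/t) *\<^sub>R z"
    have z: "z = t *\<^sub>R y"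
      using that(1) by (simp add: y_def)
    have "t * dist \<omega> y = dist (t *\<^sub>R \<omega>) z"
      using that(1) by (simp add: z dist_norm scaleR_diff_right[symmetric])
    also have "\<dots> < t * \<delta>"
      using that(2) by simp
    also have "\<dots> \<le> t * \<delta>0"
      using that(1) by (intro mult_left_mono) (auto simp: \<delta>_def)
    finally have "dist y \<omega> < \<delta>0"
      using that(1) by (simp add: dist_commute)
    then have "m \<le> norm (leading_form c y)"
      using \<delta>0 norm_triangle_ineq2[of "leading_form c \<omega>" "leading_form c y"]
      by (force simp: m_def dist_norm norm_minus_commute)
    then show ?thesis
      using that(1) by (simp add: z leading_form_scaleR norm_mult norm_power)
  qed
  show ?thesis
  proof (rule that[OF \<omega>(1) _ _ \<open>0 < m\<close> bound])
    show "0 < \<delta>" "\<delta> \<le> 1/2"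
      using \<open>0 < \<delta>0\<close> by (auto simp: \<delta>_def)
  qed
qed

lemma mpoly_fun_bounded_below_on_balls:
  assumes fin: "finite {\<alpha>. c \<alpha> \<noteq> 0}" and "total_degree c \<noteq> 0"
  obtains \<omega> \<delta> m t0 where "norm \<omega> = 3/2" "0 < \<delta>" "\<delta> \<le> 1/2" "0 < m" "1 \<le> t0"
    "\<And>t z. t0 \<le> t \<Longrightarrow> z \<in> ball (t *\<^sub>R \<omega>) (t * \<delta>) \<Longrightarrow>
       t ^ total_degree c * m \<le> norm (mpoly_fun c z)"
proof -
  obtain e where d: "total_degree c = Suc e"
    using assms(2) not0_implies_Suc by blast
  define C where "C = (\<Sum>\<alpha> | c \<alpha> \<noteq> 0. norm (c \<alpha>))"
  have "0 \<le> C"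
    by (simp add: C_def sum_nonneg)
  obtain \<omega> \<delta> m where \<omega>\<delta>: "norm \<omega> = 3/2" "0 < \<delta>" "\<delta> \<le> 1/2" and "0 < m"
    and lead: "\<And>t z. 0 < t \<Longrightarrow> z \<in> ball (t *\<^sub>R \<omega>) (t * \<delta>) \<Longrightarrow>
                 t ^ total_degree c * m \<le> norm (leading_form c z)"
    using leading_form_bounded_below_on_balls[OF assms] by blast
  define t0 where "t0 = max 1 (2 * C * 2 ^ e / m)"
  have "t ^ total_degree c * (m / 2) \<le> norm (mpoly_fun c z)"
    if t: "t0 \<le> t" and z: "z \<in> ball (t *\<^sub>R \<omega>) (t * \<delta>)" for t z
  proof -
    have "1 \<le> t" "2 * C * 2 ^ e / m \<le> t"
      using t by (auto simp: t0_def)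
    then have "C * 2 ^ e \<le> t * (m / 2)"
      using \<open>0 < m\<close> by (simp add: divide_le_eq mult.commute)
    have "t < norm z" "norm z < 2 * t"
      using norm_bounds_in_scaled_ball[OF \<omega>\<delta>(1,3) _ z] \<open>1 \<le> t\<close> by simp_all
    have "norm (mpoly_fun c z - leading_form c z) \<le> C * norm z ^ e"
      using norm_mpoly_fun_minus_leading_form_le[OF fin, of z] \<open>t < norm z\<close> \<open>1 \<le> t\<close>
      by (simp add: C_def d)
    also have "\<dots> \<le> C * (2 * t) ^ e"
      using \<open>0 \<le> C\<close> \<open>norm z < 2 * t\<close> by (intro mult_left_mono power_mono) auto
    also have "\<dots> = C * 2 ^ e * t ^ e"
      by (simp add: power_mult_distrib)
    also have "\<dots> \<le> t * (m / 2) * t ^ e"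
      using \<open>C * 2 ^ e \<le> t * (m / 2)\<close> \<open>1 \<le> t\<close> by (intro mult_right_mono) auto
    also have "\<dots> = t ^ total_degree c * (m / 2)"
      by (simp add: d)
    finally have "norm (mpoly_fun c z - leading_form c z) \<le> t ^ total_degree c * (m / 2)" .
    moreover have "t ^ total_degree c * m \<le> norm (leading_form c z)"
      using lead z \<open>1 \<le> t\<close> by simp
    ultimately show ?thesis
      using norm_triangle_ineq2[of "leading_form c z" "mpoly_fun c z"]
        norm_minus_commute[of "leading_form c z" "mpoly_fun c z"] by argo
  qed
  moreover have "0 < m / 2" "1 \<le> t0"
    using \<open>0 < m\<close> by (auto simp: t0_def)
  ultimately show ?thesis
    using that[OF \<omega>\<delta>] by blast
qed

section \<open>Integrability at infinity\<close>

lemma ex_power_of_two_bracket: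
  fixes x :: real
  assumes "1 \<le> x"
  obtains j :: nat where "2 ^ j \<le> x" "x < 2 ^ Suc j"
proof -
  define k where "k = \<lfloor>log 2 x\<rfloor>"
  have "0 \<le> k"
    using assms by (simp add: k_def)
  moreover have "2 powr k \<le> x" "x < 2 powr (k + 1)"
    using floor_log_eq_powr_iff[of x 2 k] assms by (auto simp: k_def)
  ultimately have "2 ^ nat k \<le> x" "x < 2 ^ Suc (nat k)"
    by (simp_all add: powr_realpow[symmetric] powr_add)
  with that show ?thesis .
qed

lemma suminf_ennreal_eq_top_if_bounded_below:
  fixes a :: "nat \<Rightarrow> real"
  assumes "0 < \<kappa>" "\<And>j. \<kappa> \<le> a j"
  shows "(\<Sum>j. ennreal (a j)) = top"
proof (rule summable_iff_suminf_neq_top)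
  show "0 \<le> a j" for j
    using assms order.trans[of 0 \<kappa> "a j"] by simp
  show "\<not> summable a"
  proof
    assume "summable a"
    then have "a \<longlonglongrightarrow> 0"
      by (rule summable_LIMSEQ_zero)
    then have "\<kappa> \<le> 0"
      using assms(2) by (intro LIMSEQ_le_const) auto
    with assms(1) show False
      by simp
  qed
qed

lemma nn_integral_eq_infinity_if_bounded_below_on_disjoint_family:
  fixes f :: "'a \<Rightarrow> ennreal"
  assumes "disjoint_family T" "\<And>j. T j \<in> sets M" "\<And>j x. x \<in> T j \<Longrightarrow> b j \<le> f x"
    and "(\<Sum>j. b j * emeasure M (T j)) = \<infinity>"
  shows "(\<integral>\<^sup>+x. f x \<partial>M) = \<infinity>"
proof -
  have "(\<Sum>j. b j * indicator (T j) x) \<le> f x" for x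
  proof (cases "\<exists>j. x \<in> T j")
    case True
    then obtain j where "x \<in> T j" ..
    then show ?thesis
      using suminf_cmult_indicator[OF assms(1)] assms(3) by simp
  qed simp
  then have "(\<integral>\<^sup>+x. (\<Sum>j. b j * indicator (T j) x) \<partial>M) \<le> (\<integral>\<^sup>+x. f x \<partial>M)"
    by (intro nn_integral_mono)
  moreover have "(\<integral>\<^sup>+x. (\<Sum>j. b j * indicator (T j) x) \<partial>M) = (\<Sum>j. b j * emeasure M (T j))"
    using assms(2) by (simp add: nn_integral_suminf nn_integral_cmult_indicator)
  ultimately show ?thesis
    using assms(4) by (simp add: top_unique)
qed

text \<open>The shell \<open>2^k \<le> |z| < 2^(k+1)\<close> has volume of order \<open>2^(kN)\<close>, so the bounds of the
  integral over the shells form a geometric series of ratio \<open>2^(N - q)\<close>.\<close>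
lemma nn_integral_outside_ball_finite_if_power_decay:
  fixes f :: "'a::euclidean_space \<Rightarrow> ennreal"
  assumes "real DIM('a) < q" "0 \<le> C" "1 \<le> r"
    and decay: "\<And>z. r < norm z \<Longrightarrow> f z \<le> ennreal (C * norm z powr -q)"
  shows "(\<integral>\<^sup>+z\<in>-cball 0 r. f z \<partial>lborel) < \<infinity>"
proof -
  define N where "N = DIM('a)"
  define V where "V = unit_ball_vol (real N)"
  define S where "S k = ball (0::'a) (2 ^ Suc k) - ball 0 (2 ^ k)" for k :: nat
  define b where "b k = C * (2 ^ k) powr -q" for k :: nat
  have S_meas: "S k \<in> sets lborel" for k
    by (simp add: S_def)
  have "f z * indicator (-cball 0 r) z \<le> (\<Sum>k. ennreal (b k) * indicator (S k) z)" for z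
  proof (cases "r < norm z")
    case True
    then obtain j where j: "2 ^ j \<le> norm z" "norm z < 2 ^ Suc j"
      using ex_power_of_two_bracket[of "norm z"] assms(3) by auto
    have "norm z powr -q \<le> (2 ^ j) powr -q"
      using j(1) assms(1) by (intro powr_mono2') auto
    then have "ennreal (C * norm z powr -q) \<le> ennreal (b j)"
      unfolding b_def using assms(2) by (intro ennreal_leI mult_left_mono)
    with decay[OF True] have "f z \<le> ennreal (b j)"
      by (rule order.trans)
    also have "\<dots> = (\<Sum>k\<in>{j}. ennreal (b k) * indicator (S k) z)"
      using j by (simp add: S_def)
    also have "\<dots> \<le> (\<Sum>k. ennreal (b k) * indicator (S k) z)"
      by (rule sum_le_suminf) auto
    finally show ?thesis
      by (simp add: indicator_def)
  qed (simp add: indicator_def)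
  then have "(\<integral>\<^sup>+z\<in>-cball 0 r. f z \<partial>lborel) \<le> (\<integral>\<^sup>+z. (\<Sum>k. ennreal (b k) * indicator (S k) z) \<partial>lborel)"
    by (intro nn_integral_mono)
  also have "\<dots> = (\<Sum>k. \<integral>\<^sup>+z. ennreal (b k) * indicator (S k) z \<partial>lborel)"
    by (rule nn_integral_suminf) (use S_meas in measurable)
  also have "\<dots> = (\<Sum>k. ennreal (b k) * emeasure lborel (S k))"
    using S_meas by (simp add: nn_integral_cmult_indicator)
  also have "\<dots> \<le> (\<Sum>k. ennreal (C * V * 2 ^ N * (2 powr (N - q)) ^ k))"
  proof (intro suminf_le summableI)
    fix k
    have "(2 ^ k) powr -q * (2 ^ Suc k) ^ N = 2 ^ N * (2 powr (N - q)) ^ k"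
      by (simp add: powr_realpow[symmetric] powr_powr powr_power powr_add[symmetric] algebra_simps)
    then have geometric: "b k * (V * (2 ^ Suc k) ^ N) = C * V * 2 ^ N * (2 powr (N - q)) ^ k"
      by (simp add: b_def algebra_simps)
    have "emeasure lborel (S k) \<le> emeasure lborel (ball (0::'a) (2 ^ Suc k))"
      by (intro emeasure_mono) (auto simp: S_def)
    also have "\<dots> = ennreal (V * (2 ^ Suc k) ^ N)"
      by (simp add: emeasure_ball V_def N_def)
    finally have "ennreal (b k) * emeasure lborel (S k) \<le> ennreal (b k) * ennreal (V * (2 ^ Suc k) ^ N)"
      by (rule mult_left_mono) simp
    also have "\<dots> = ennreal (b k * (V * (2 ^ Suc k) ^ N))"
      by (rule ennreal_mult[symmetric]) (simp_all add: b_def assms(2) V_def)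
    also have "\<dots> = ennreal (C * V * 2 ^ N * (2 powr (N - q)) ^ k)"
      by (simp only: geometric)
    finally show "ennreal (b k) * emeasure lborel (S k) \<le> ennreal (C * V * 2 ^ N * (2 powr (N - q)) ^ k)" .
  qed
  also have "\<dots> < \<infinity>"
  proof -
    have "2 powr (N - q) < 1"
      using assms(1) by (intro powr_less_one) (auto simp: N_def)
    then have "summable (\<lambda>k. C * V * 2 ^ N * (2 powr (N - q)) ^ k)"
      by (intro summable_mult summable_geometric) simp
    moreover have "0 \<le> C * V * 2 ^ N * (2 powr (N - q)) ^ k" for k
      using assms(2) by (simp add: V_def)
    ultimately show ?thesis
      using ennreal_suminf_neq_top by (simp add: top.not_eq_extremum)
  qed
  finally show ?thesis .
qed

lemma disjoint_family_dyadic_scaled_balls: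
  fixes \<omega> :: "'a::real_normed_vector"
  assumes "norm \<omega> = 3/2" "\<delta> \<le> 1/2" "0 < \<tau>"
  shows "disjoint_family (\<lambda>j::nat. ball ((2 ^ j * \<tau>) *\<^sub>R \<omega>) (2 ^ j * \<tau> * \<delta>))"
proof -
  have "z \<notin> ball ((2 ^ j * \<tau>) *\<^sub>R \<omega>) (2 ^ j * \<tau> * \<delta>)"
    if "i < j" "z \<in> ball ((2 ^ i * \<tau>) *\<^sub>R \<omega>) (2 ^ i * \<tau> * \<delta>)" for i j :: nat and z
  proof
    assume "z \<in> ball ((2 ^ j * \<tau>) *\<^sub>R \<omega>) (2 ^ j * \<tau> * \<delta>)"
    then have "2 ^ j * \<tau> < norm z"
      using norm_bounds_in_scaled_ball(1)[OF assms(1,2)] assms(3) by simp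
    moreover have "norm z < 2 ^ Suc i * \<tau>"
      using norm_bounds_in_scaled_ball[OF assms(1,2) _ that(2)] assms(3) by simp
    moreover have "2 ^ Suc i * \<tau> \<le> 2 ^ j * \<tau>"
      using that(1) assms(3) by (intro mult_right_mono power_increasing) auto
    ultimately show False
      by linarith
  qed
  then show ?thesis
    unfolding disjoint_family_on_def by (metis disjoint_iff linorder_neqE_nat)
qed

lemma nn_integral_eq_infinity_if_lower_bound_on_scaled_balls:
  fixes f :: "'a::euclidean_space \<Rightarrow> ennreal" and \<omega> :: 'a
  assumes "norm \<omega> = 3/2" "0 < \<delta>" "\<delta> \<le> 1/2" "0 < \<kappa>" "1 \<le> \<tau>" "- real DIM('a) \<le> p"
    and lower: "\<And>t z. \<tau> \<le> t \<Longrightarrow> z \<in> ball (t *\<^sub>R \<omega>) (t * \<delta>) \<Longrightarrow> ennreal (\<kappa> * t powr p) \<le> f z"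
  shows "(\<integral>\<^sup>+z. f z \<partial>lborel) = \<infinity>"
proof -
  define N where "N = DIM('a)"
  define V where "V = unit_ball_vol (real N)"
  define t where "t j = 2 ^ j * \<tau>" for j :: nat
  have "\<tau> \<le> t j" for j
    unfolding t_def using \<open>1 \<le> \<tau>\<close> mult_right_mono[of 1 "2 ^ j" \<tau>] by simp
  then have t: "\<tau> \<le> t j" "1 \<le> t j" for j
    using \<open>1 \<le> \<tau>\<close> order.trans by blast+
  have "ennreal (\<kappa> * t j powr p) * emeasure lborel (ball (t j *\<^sub>R \<omega>) (t j * \<delta>))
      = ennreal (\<kappa> * V * \<delta> ^ N * t j powr (p + N))" for j
  proof -
    have "t j powr (p + N) = t j powr p * t j ^ N"
      using t(2)[of j] by (simp add: powr_add powr_realpow)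
    moreover have "emeasure lborel (ball (t j *\<^sub>R \<omega>) (t j * \<delta>)) = ennreal (V * (t j * \<delta>) ^ N)"
      using t(2)[of j] \<open>0 < \<delta>\<close> by (simp add: emeasure_ball V_def N_def)
    ultimately show ?thesis
      using t(2)[of j] \<open>0 < \<delta>\<close> \<open>0 < \<kappa>\<close>
      by (simp add: ennreal_mult[symmetric] V_def power_mult_distrib mult_ac)
  qed
  moreover have "\<kappa> * V * \<delta> ^ N \<le> \<kappa> * V * \<delta> ^ N * t j powr (p + N)" for j
  proof -
    have "1 \<le> t j powr (p + N)"
      using t(2)[of j] assms(6) by (intro ge_one_powr_ge_zero) (auto simp: N_def)
    then show ?thesis
      using \<open>0 < \<delta>\<close> \<open>0 < \<kappa>\<close> mult_left_mono[of 1 "t j powr (p + N)" "\<kappa> * V * \<delta> ^ N"]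
      by (simp add: V_def)
  qed
  ultimately have "(\<Sum>j. ennreal (\<kappa> * t j powr p) * emeasure lborel (ball (t j *\<^sub>R \<omega>) (t j * \<delta>))) = \<infinity>"
    using suminf_ennreal_eq_top_if_bounded_below[of "\<kappa> * V * \<delta> ^ N"] \<open>0 < \<delta>\<close> \<open>0 < \<kappa>\<close>
    by (simp add: V_def)
  moreover have "disjoint_family (\<lambda>j. ball (t j *\<^sub>R \<omega>) (t j * \<delta>))"
    unfolding t_def using disjoint_family_dyadic_scaled_balls[OF assms(1,3)] \<open>1 \<le> \<tau>\<close> by simp
  ultimately show ?thesis
    using lower t(1) by (intro nn_integral_eq_infinity_if_bounded_below_on_disjoint_family) auto
qed

lemma nn_integral_mpoly_weight_outside_compact_eq_infinity:
  fixes c :: "('n::finite \<Rightarrow> nat) \<Rightarrow> complex" and W :: "complex^'n \<Rightarrow> ennreal"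
  assumes fin: "finite {\<alpha>. c \<alpha> \<noteq> 0}" and "total_degree c \<noteq> 0"
    and "0 \<le> s" "s \<le> real (total_degree c) + real CARD('n)"
    and W: "\<And>z. R \<le> norm z \<Longrightarrow> ennreal (norm z powr (-2 * s)) \<le> W z"
    and "compact K"
  shows "(\<integral>\<^sup>+z\<in>UNIV - K. ennreal ((norm (mpoly_fun c z))\<^sup>2) * W z \<partial>lborel) = \<infinity>"
proof -
  define d where "d = total_degree c"
  obtain \<omega> \<delta> m t0 where \<omega>\<delta>: "norm \<omega> = 3/2" "0 < \<delta>" "\<delta> \<le> 1/2" and "0 < m" "1 \<le> t0"
    and lower: "\<And>t z. t0 \<le> t \<Longrightarrow> z \<in> ball (t *\<^sub>R \<omega>) (t * \<delta>) \<Longrightarrow> t ^ d * m \<le> norm (mpoly_fun c z)"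
    unfolding d_def using mpoly_fun_bounded_below_on_balls[OF fin assms(2)] by blast
  obtain \<rho> where \<rho>: "\<And>z. z \<in> K \<Longrightarrow> norm z \<le> \<rho>"
    using compact_imp_bounded[OF \<open>compact K\<close>] bounded_iff by blast
  define \<tau> where "\<tau> = max t0 (max R \<rho>)"
  have "ennreal (m\<^sup>2 * 2 powr (-2 * s) * t powr (2 * d - 2 * s))
          \<le> ennreal ((norm (mpoly_fun c z))\<^sup>2) * W z * indicator (UNIV - K) z"
    if "\<tau> \<le> t" "z \<in> ball (t *\<^sub>R \<omega>) (t * \<delta>)" for t z
  proof -
    have "0 < t" "t0 \<le> t" "R \<le> t" "\<rho> \<le> t"
      using that(1) \<open>1 \<le> t0\<close> by (auto simp: \<tau>_def)
    then have z: "t < norm z" "norm z < 2 * t"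
      using norm_bounds_in_scaled_ball[OF \<omega>\<delta>(1,3) _ that(2)] by simp_all
    then have "z \<notin> K"
      using \<rho> \<open>\<rho> \<le> t\<close> by fastforce
    have "(2 * t) powr (-2 * s) \<le> norm z powr (-2 * s)"
      using z \<open>0 < t\<close> \<open>0 \<le> s\<close> by (intro powr_mono2') auto
    then have weight: "ennreal ((2 * t) powr (-2 * s)) \<le> W z"
      using W[of z] z \<open>R \<le> t\<close> by (meson ennreal_leI less_imp_le order.trans)
    have poly: "ennreal ((t ^ d * m)\<^sup>2) \<le> ennreal ((norm (mpoly_fun c z))\<^sup>2)"
      using lower[OF \<open>t0 \<le> t\<close> that(2)] \<open>0 < m\<close> \<open>0 < t\<close> by (intro ennreal_leI power_mono) auto
    have "m\<^sup>2 * 2 powr (-2 * s) * t powr (2 * d - 2 * s) = (t ^ d * m)\<^sup>2 * (2 * t) powr (-2 * s)"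
      using \<open>0 < t\<close>
      by (simp add: powr_mult powr_diff powr_realpow[symmetric] powr_powr power_mult_distrib
                    powr_minus divide_inverse mult_ac)
    also have "ennreal \<dots> = ennreal ((t ^ d * m)\<^sup>2) * ennreal ((2 * t) powr (-2 * s))"
      by (rule ennreal_mult) auto
    also have "\<dots> \<le> ennreal ((norm (mpoly_fun c z))\<^sup>2) * W z"
      by (rule mult_mono[OF poly weight]) auto
    finally show ?thesis
      using \<open>z \<notin> K\<close> by simp
  qed
  moreover have "- real DIM(complex^'n) \<le> 2 * d - 2 * s"
    using assms(4) by (simp add: d_def)
  ultimately show ?thesis
    using \<open>0 < m\<close> \<open>1 \<le> t0\<close> \<omega>\<delta>
    by (intro nn_integral_eq_infinity_if_lower_bound_on_scaled_balls[where \<tau> = \<tau>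
          and \<kappa> = "m\<^sup>2 * 2 powr (-2 * s)" and p = "2 * d - 2 * s"]) (auto simp: \<tau>_def)
qed

lemma nn_integral_mpoly_weight_outside_ball_finite:
  fixes c :: "('n::finite \<Rightarrow> nat) \<Rightarrow> complex" and W :: "complex^'n \<Rightarrow> ennreal"
  assumes fin: "finite {\<alpha>. c \<alpha> \<noteq> 0}" and "real (total_degree c) + real CARD('n) < s"
    and W: "\<And>z. R \<le> norm z \<Longrightarrow> W z \<le> ennreal (norm z powr (-2 * s))"
  obtains K where "compact K"
    "(\<integral>\<^sup>+z\<in>UNIV - K. ennreal ((norm (mpoly_fun c z))\<^sup>2) * W z \<partial>lborel) < \<infinity>"
proof -
  define d where "d = total_degree c"
  define C where "C = (\<Sum>\<alpha> | c \<alpha> \<noteq> 0. norm (c \<alpha>))"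
  define r where "r = max 1 R"
  have decay: "ennreal ((norm (mpoly_fun c z))\<^sup>2) * W z \<le> ennreal (C\<^sup>2 * norm z powr -(2 * s - 2 * d))"
    if "r < norm z" for z
  proof -
    have "1 \<le> norm z" "R \<le> norm z"
      using that by (auto simp: r_def)
    have "norm (mpoly_fun c z) \<le> C * norm z ^ d"
      using norm_mpoly_fun_le[OF fin \<open>1 \<le> norm z\<close>] by (simp add: C_def d_def)
    then have "ennreal ((norm (mpoly_fun c z))\<^sup>2) \<le> ennreal ((C * norm z ^ d)\<^sup>2)"
      by (intro ennreal_leI power_mono) auto
    then have bound: "ennreal ((norm (mpoly_fun c z))\<^sup>2) * W z
        \<le> ennreal ((C * norm z ^ d)\<^sup>2) * ennreal (norm z powr (-2 * s))"
      using W[OF \<open>R \<le> norm z\<close>] by (rule mult_mono) auto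
    have "0 < norm z"
      using \<open>1 \<le> norm z\<close> by linarith
    then have "(norm z ^ d)\<^sup>2 = norm z powr (2 * real d)"
      by (simp add: powr_realpow[symmetric] powr_powr mult.commute)
    then have "(norm z ^ d)\<^sup>2 * norm z powr (-2 * s) = norm z powr -(2 * s - 2 * d)"
      using \<open>0 < norm z\<close> by (simp add: powr_add[symmetric])
    then have "ennreal ((C * norm z ^ d)\<^sup>2) * ennreal (norm z powr (-2 * s))
        = ennreal (C\<^sup>2 * norm z powr -(2 * s - 2 * d))"
      by (simp add: ennreal_mult[symmetric] power_mult_distrib mult.assoc)
    with bound show ?thesis
      by simp
  qed
  have "(\<integral>\<^sup>+z\<in>-cball 0 r. ennreal ((norm (mpoly_fun c z))\<^sup>2) * W z \<partial>lborel) < \<infinity>"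
    by (rule nn_integral_outside_ball_finite_if_power_decay[OF _ _ _ decay])
      (use assms(2) in \<open>auto simp: r_def d_def\<close>)
  moreover have "UNIV - cball 0 r = - cball (0::complex^'n) r"
    by auto
  ultimately show ?thesis
    using that[of "cball 0 r"] by simp
qed

section \<open>The weight at infinity\<close>

lemma exp_weight_ge_powr:
  assumes "0 \<le> a" "0 < t" "u z < ereal (s * ln t)"
  shows "ennreal (t powr (-a * s)) \<le> exp_weight a u z"
proof (cases "u z")
  case (real v)
  then have "-a * (s * ln t) \<le> -a * v"
    using assms by (intro mult_left_mono_neg) auto
  then show ?thesis
    using real assms(2) by (simp add: exp_weight_def powr_def ennreal_leI)
qed (use assms in \<open>auto simp: exp_weight_def\<close>)

lemma exp_weight_le_powr:
  assumes "0 \<le> a" "0 < t" "ereal (s * ln t) < u z" "u z \<noteq> \<infinity>"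
  shows "exp_weight a u z \<le> ennreal (t powr (-a * s))"
proof -
  obtain v where v: "u z = ereal v" "s * ln t < v"
    using assms(3,4) by (cases "u z") auto
  then have "-a * v \<le> -a * (s * ln t)"
    using assms(1) by (intro mult_left_mono_neg) auto
  then show ?thesis
    using v assms(2) by (simp add: exp_weight_def powr_def ennreal_leI)
qed

lemma sigma_inf_less_imp_exp_weight_ge:
  assumes "sigma_inf u < ereal s" "0 \<le> a"
  obtains R where "\<And>z. R \<le> norm z \<Longrightarrow> ennreal (norm z powr (-a * s)) \<le> exp_weight a u z"
proof -
  have "eventually (\<lambda>z. u z / ereal (ln (norm z)) < ereal s) at_infinity"
    using assms(1) unfolding sigma_inf_def by (rule Limsup_lessD)
  then obtain R where R: "\<And>z. R \<le> norm z \<Longrightarrow> u z / ereal (ln (norm z)) < ereal s"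
    unfolding eventually_at_infinity by blast
  have "ennreal (norm z powr (-a * s)) \<le> exp_weight a u z" if "max R 2 \<le> norm z" for z
  proof -
    have "0 < ln (norm z)"
      using that by (intro ln_gt_zero) auto
    then have "u z < ereal (s * ln (norm z))"
      using R[of z] that by (cases "u z") (auto simp: field_simps)
    then show ?thesis
      using that assms(2) by (intro exp_weight_ge_powr) auto
  qed
  with that show ?thesis .
qed

lemma L_inf_greater_imp_exp_weight_le:
  assumes "ereal s < L_inf u" "0 \<le> a" "\<And>z. u z \<noteq> \<infinity>"
  obtains R where "\<And>z. R \<le> norm z \<Longrightarrow> exp_weight a u z \<le> ennreal (norm z powr (-a * s))"
proof -
  have "eventually (\<lambda>z. ereal s < u z / ereal (ln (norm z))) at_infinity"
    using assms(1) unfolding L_inf_def by (rule less_LiminfD)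
  then obtain R where R: "\<And>z. R \<le> norm z \<Longrightarrow> ereal s < u z / ereal (ln (norm z))"
    unfolding eventually_at_infinity by blast
  have "exp_weight a u z \<le> ennreal (norm z powr (-a * s))" if "max R 2 \<le> norm z" for z
  proof -
    have "0 < ln (norm z)"
      using that by (intro ln_gt_zero) auto
    then have "ereal (s * ln (norm z)) < u z"
      using R[of z] that assms(3)[of z] by (cases "u z") (auto simp: field_simps)
    then show ?thesis
      using that assms(2,3) by (intro exp_weight_le_powr) auto
  qed
  with that show ?thesis .
qed

lemma mpoly_in_P_inf_imp_total_degree_le:
  fixes u :: "complex^'n \<Rightarrow> ereal"
  assumes "\<bar>sigma_inf u\<bar> \<noteq> \<infinity>" "ereal (real CARD('n)) < sigma_inf u"
    and fin: "finite {\<alpha>. c \<alpha> \<noteq> 0}" and "mpoly_fun c \<in> P_inf u"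
  shows "ereal (real (total_degree c)) \<le> sigma_inf u - ereal (real CARD('n))"
proof (rule ccontr)
  obtain K where "compact K"
    and K: "(\<integral>\<^sup>+z\<in>UNIV - K. ennreal ((norm (mpoly_fun c z))\<^sup>2) * exp_weight 2 u z \<partial>lborel) < \<infinity>"
    using assms(4) unfolding P_inf_def by blast
  assume "\<not> ?thesis"
  then have \<sigma>: "sigma_inf u < ereal (real (total_degree c) + real CARD('n))" and "total_degree c \<noteq> 0"
    using assms(1,2) by (cases "sigma_inf u"; auto)+
  have "(0::real) \<le> 2"
    by simp
  obtain R where R: "\<And>z. R \<le> norm z \<Longrightarrow>
      ennreal (norm z powr (-2 * (real (total_degree c) + real CARD('n)))) \<le> exp_weight 2 u z"
    using sigma_inf_less_imp_exp_weight_ge[OF \<sigma> \<open>(0::real) \<le> 2\<close>] by blast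
  have "(\<integral>\<^sup>+z\<in>UNIV - K. ennreal ((norm (mpoly_fun c z))\<^sup>2) * exp_weight 2 u z \<partial>lborel) = \<infinity>"
    by (rule nn_integral_mpoly_weight_outside_compact_eq_infinity[OF fin \<open>total_degree c \<noteq> 0\<close>
          _ order.refl R \<open>compact K\<close>]) simp
  with K show False
    by simp
qed

lemma mpoly_in_P_inf_if_total_degree_less:
  fixes u :: "complex^'n \<Rightarrow> ereal"
  assumes "\<And>z. u z \<noteq> \<infinity>" and fin: "finite {\<alpha>. c \<alpha> \<noteq> 0}"
    and "ereal (real (total_degree c)) < L_inf u - ereal (real CARD('n))"
  shows "mpoly_fun c \<in> P_inf u"
proof -
  have "ereal (real (total_degree c) + real CARD('n)) < L_inf u"
    using assms(3) by (cases "L_inf u") auto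
  then obtain s where s: "real (total_degree c) + real CARD('n) < s" "ereal s < L_inf u"
    using ereal_dense2 less_ereal.simps(1) by blast
  have "(0::real) \<le> 2"
    by simp
  obtain R where "\<And>z. R \<le> norm z \<Longrightarrow> exp_weight 2 u z \<le> ennreal (norm z powr (-2 * s))"
    using L_inf_greater_imp_exp_weight_le[OF s(2) \<open>(0::real) \<le> 2\<close> assms(1)] by blast
  then obtain K where "compact K"
    "(\<integral>\<^sup>+z\<in>UNIV - K. ennreal ((norm (mpoly_fun c z))\<^sup>2) * exp_weight 2 u z \<partial>lborel) < \<infinity>"
    by (rule nn_integral_mpoly_weight_outside_ball_finite[OF fin s(1)])
  with fin show ?thesis
    unfolding P_inf_def by blast
qed

theorem proposition8p2:
  fixes u :: "complex^'n \<Rightarrow> ereal"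
  assumes "LPSH u" and "sigma_inf u > ereal (real CARD('n))"
  shows "(\<forall>c. finite {\<alpha>. c \<alpha> \<noteq> 0} \<and> mpoly_fun c \<in> P_inf u \<longrightarrow>
            ereal (real (total_degree c)) \<le> sigma_inf u - ereal (real CARD('n))) \<and>
         (L_inf u > ereal (real CARD('n)) \<and> (\<forall>\<zeta>. lct u \<zeta> > 1) \<longrightarrow>
          (\<forall>c. finite {\<alpha>. c \<alpha> \<noteq> 0} \<and> ereal (real (total_degree c)) < L_inf u - ereal (real CARD('n))
               \<longrightarrow> mpoly_fun c \<in> P_inf u))"
proof (intro conjI allI impI)
  have "\<bar>sigma_inf u\<bar> \<noteq> \<infinity>" and finite_u: "\<And>z. u z \<noteq> \<infinity>"
    using assms(1) by (auto simp: LPSH_def psh_def)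
  show "ereal (real (total_degree c)) \<le> sigma_inf u - ereal (real CARD('n))"
    if "finite {\<alpha>. c \<alpha> \<noteq> 0} \<and> mpoly_fun c \<in> P_inf u" for c
    using that mpoly_in_P_inf_imp_total_degree_le[OF \<open>\<bar>sigma_inf u\<bar> \<noteq> \<infinity>\<close> assms(2)] by blast
  show "mpoly_fun c \<in> P_inf u"
    if "finite {\<alpha>. c \<alpha> \<noteq> 0} \<and> ereal (real (total_degree c)) < L_inf u - ereal (real CARD('n))" for c
    using that mpoly_in_P_inf_if_total_degree_less[where u = u, OF finite_u] by blast
qed

end
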